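(* Let $\epsilon>0$ be a constant, $|N|=n$, $k=n^{1/4-\epsilon/2}$, $r=n^{1/4}$, and define $g(S)=|S|$, $b(S)=\min(|S|,\log n)$, $m(S)=\min(1,|S|/n^{1/2})$, $m^+(S)=n^{-1/4}\min(n^{1/2},|S|)$. Then the class $\mathcal F(g,b,m,m^+)$ has an $(n^{1/4-\epsilon},0)$-gap with $t=n^{1/2+\epsilon/4}$.
   Context: $\mathcal P$ is the set of partitions $P$ of $N$ into $r$ parts $T_1,\dots,T_r$ of $k$ elements each and a part $M$ of the remaining $n-rk$ elements; $\mathcal U(\mathcal P)$ is the uniform distribution on $\mathcal P$; $T_{-i}=\bigcup_{j\ne i}T_j$. $\mathcal F(g,b,m,m^+)=\{f^{P,i}:P\in\mathcal P,i\in[r]\}$ with $f^{P,i}(S)=(1-m(S\cap M))(g(S\cap T_i)+b(S\cap T_{-i}))+m^+(S\cap M)$. The class has an $(\alpha,\beta)$-gap with parameter $t$ if: (1) for every fixed $S$ with $|S|\le t$, with probability $1-n^{-\omega(1)}$ over $P\sim\mathcal U(\mathcal P)$, $g(S\cap T_i)+b(S\cap T_{-i})$ does not depend on $i$; (2) for every fixed $S$ with $|S|\ge t$, with probability $1-n^{-\omega(1)}$ over $P\sim\mathcal U(\mathcal P)$, $m(S\cap M)=1$; (3) for every $S$ with $|S|=k$, $g(S)\ge\max\{\alpha b(S),\alpha m^+(S)\}$; (4) for all $S_1$ with $|S_1|=k$ and $S_2$ with $|S_2|=k/r$, $g(S_1)\ge(1-\beta)r\,g(S_2)$. Statements are asymptotic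 in $n$. *)

theory Defs
  imports Complex_Main
begin

text \<open>Ground set N = {..<n}. A partition P = (T, M): parts T 0, ..., T (r-1) of k elements
  each (T i = {} for i >= r, as a normal form), M = the remaining elements.\<close>
definition partitions :: "nat \<Rightarrow> nat \<Rightarrow> nat \<Rightarrow> ((nat \<Rightarrow> nat set) \<times> nat set) set" where
  "partitions n r k = {(T, M).
      (\<forall>i<r. T i \<subseteq> {..<n} \<and> card (T i) = k) \<and>
      (\<forall>i. r \<le> i \<longrightarrow> T i = {}) \<and>
      (\<forall>i<r. \<forall>j<r. i \<noteq> j \<longrightarrow> T i \<inter> T j = {}) \<and>
      M = {..<n} - (\<Union>i<r. T i)}"

definition Tminus :: "nat \<Rightarrow> (nat \<Rightarrow> nat set) \<Rightarrow> nat \<Rightarrow> nat set" where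
  "Tminus r T i = (\<Union>j\<in>{..<r} - {i}. T j)"

definition unif_prob :: "'a set \<Rightarrow> ('a \<Rightarrow> bool) \<Rightarrow> real" where
  "unif_prob A Q = real (card {x\<in>A. Q x}) / real (card A)"

text \<open>(alpha, beta)-gap with parameter t of the class F(g,b,m,m+); all data are families indexed by n.
  "For every fixed S ... with probability 1 - n^{-omega(1)}" is rendered uniformly in S
  (equivalent, since S may depend on n): failure probability <= n^{-c} eventually, for every c > 0.\<close>
definition has_gap ::
  "(nat \<Rightarrow> nat) \<Rightarrow> (nat \<Rightarrow> nat) \<Rightarrow>
   (nat \<Rightarrow> nat set \<Rightarrow> real) \<Rightarrow> (nat \<Rightarrow> nat set \<Rightarrow> real) \<Rightarrow>
   (nat \<Rightarrow> nat set \<Rightarrow> real) \<Rightarrow> (nat \<Rightarrow> nat set \<Rightarrow> real) \<Rightarrow>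
   (nat \<Rightarrow> real) \<Rightarrow> (nat \<Rightarrow> real) \<Rightarrow> (nat \<Rightarrow> real) \<Rightarrow> bool" where
  "has_gap k r g b m mp \<alpha> \<beta> t \<longleftrightarrow>
     (\<forall>c>0. eventually (\<lambda>n. \<forall>S. S \<subseteq> {..<n} \<and> real (card S) \<le> t n \<longrightarrow>
        1 - unif_prob (partitions n (r n) (k n))
          (\<lambda>(T, M). \<forall>i<r n. \<forall>j<r n.
              g n (S \<inter> T i) + b n (S \<inter> Tminus (r n) T i) =
              g n (S \<inter> T j) + b n (S \<inter> Tminus (r n) T j))
        \<le> real n powr (- c)) at_top) \<and>
     (\<forall>c>0. eventually (\<lambda>n. \<forall>S. S \<subseteq> {..<n} \<and> real (card S) \<ge> t n \<longrightarrow>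
        1 - unif_prob (partitions n (r n) (k n)) (\<lambda>(T, M). m n (S \<inter> M) = 1)
        \<le> real n powr (- c)) at_top) \<and>
     eventually (\<lambda>n. \<forall>S. S \<subseteq> {..<n} \<and> card S = k n \<longrightarrow>
        g n S \<ge> max (\<alpha> n * b n S) (\<alpha> n * mp n S)) at_top \<and>
     eventually (\<lambda>n. \<forall>S1 S2. S1 \<subseteq> {..<n} \<and> S2 \<subseteq> {..<n} \<and> card S1 = k n \<and>
        real (card S2) = real (k n) / real (r n) \<longrightarrow>
        g n S1 \<ge> (1 - \<beta> n) * real (r n) * g n S2) at_top"

end

theory Submission
  imports Defs "HOL-Combinatorics.Permutations" "HOL-Real_Asymp.Real_Asymp"
begin

text \<open>Conditions (3) and (4) are elementary inequalities. The parts cover at most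
  rk \<le> n^(1/2 - \<epsilon>/2) elements, so a set of size at least n^(1/2 + \<epsilon>/4) keeps more than
  n^(1/2) elements in M for every partition, which gives (2). For (1): if S meets the union U of
  the parts in at most ln n elements, then g(S \<inter> T_i) + b(S \<inter> T_{-i}) = |S \<inter> U| for every i.
  The uniform partition is invariant under permutations of the ground set, so U contains a fixed
  L-set with probability at most C(rk, L) / C(n, L), and |S \<inter> U| \<ge> L has probability at most
  C(|S|, L) C(rk, L) / C(n, L) \<le> (|S| rk L / n)^L \<le> n^(-\<epsilon>L/8). Taking L = \<lfloor>ln n\<rfloor> + 1
  makes this n^(-\<omega>(1)).\<close>

definition parts_union :: "nat \<Rightarrow> (nat \<Rightarrow> nat set) \<Rightarrow> nat set" where
  "parts_union r T = (\<Union>i<r. T i)"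

definition permute_partition ::
  "(nat \<Rightarrow> nat) \<Rightarrow> (nat \<Rightarrow> nat set) \<times> nat set \<Rightarrow> (nat \<Rightarrow> nat set) \<times> nat set" where
  "permute_partition p = (\<lambda>(T, M). (\<lambda>i. p ` T i, p ` M))"

definition covering_partitions ::
  "nat \<Rightarrow> nat \<Rightarrow> nat \<Rightarrow> nat set \<Rightarrow> ((nat \<Rightarrow> nat set) \<times> nat set) set" where
  "covering_partitions n r k A = {P \<in> partitions n r k. A \<subseteq> parts_union r (fst P)}"

lemma finite_partitions: "finite (partitions n r k)"
proof (rule finite_subset)
  show "partitions n r k \<subseteq>
      {T. \<forall>i. (i \<in> {..<r} \<longrightarrow> T i \<in> Pow {..<n}) \<and> (i \<notin> {..<r} \<longrightarrow> T i = {})} \<times> Pow {..<n}"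
    by (auto simp: partitions_def not_less)
qed (intro finite_SigmaI finite_set_of_finite_funs; simp)

lemma partitions_nonempty:
  assumes "r * k \<le> n"
  shows "partitions n r k \<noteq> {}"
proof -
  define T where "T i = (if i < r then {i * k..<(i + 1) * k} else {})" for i
  have "T i \<subseteq> {..<n} \<and> card (T i) = k" if "i < r" for i
  proof -
    have "(i + 1) * k \<le> r * k" using that by (intro mult_le_mono1) simp
    with assms that show ?thesis by (auto simp: T_def)
  qed
  moreover have "T i \<inter> T j = {}" if "i \<noteq> j" for i j
  proof (cases "i < j")
    case True
    then have "(i + 1) * k \<le> j * k" by (intro mult_le_mono1) simp
    then show ?thesis by (auto simp: T_def)
  next
    case False
    with that have "(j + 1) * k \<le> i * k" by (intro mult_le_mono1) simp
    then show ?thesis by (auto simp: T_def)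
  qed
  moreover have "T i = {}" if "r \<le> i" for i
    using that by (simp add: T_def)
  ultimately have "(T, {..<n} - (\<Union>i<r. T i)) \<in> partitions n r k"
    by (simp add: partitions_def)
  then show ?thesis by blast
qed

lemma parts_union_subset:
  "(T, M) \<in> partitions n r k \<Longrightarrow> parts_union r T \<subseteq> {..<n}"
  by (auto simp: partitions_def parts_union_def)

lemma card_parts_union_le:
  assumes "(T, M) \<in> partitions n r k"
  shows "card (parts_union r T) \<le> r * k"
proof -
  have "card (parts_union r T) \<le> (\<Sum>i<r. card (T i))"
    unfolding parts_union_def by (rule card_UN_le) simp
  also have "\<dots> = r * k" using assms by (simp add: partitions_def)
  finally show ?thesis .
qed

lemma exists_permutes_image:
  assumes "finite X" "A \<subseteq> X" "B \<subseteq> X" "card A = card B"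
  obtains p where "p permutes X" "p ` A = B"
proof -
  have "finite A" "finite B" using assms finite_subset by blast+
  with assms(4) obtain f where f: "bij_betw f A B" using finite_same_card_bij by blast
  have "card (X - A) = card (X - B)"
    using assms \<open>finite A\<close> \<open>finite B\<close> by (simp add: card_Diff_subset)
  with assms(1) obtain g where g: "bij_betw g (X - A) (X - B)" using finite_same_card_bij by blast
  define p where "p x = (if x \<in> A then f x else if x \<in> X then g x else x)" for x
  have "bij_betw p A B" using f by (rule bij_betw_cong[THEN iffD1, rotated]) (simp add: p_def)
  moreover have "bij_betw p (X - A) (X - B)" using g by (rule bij_betw_cong[THEN iffD1, rotated]) (simp add: p_def)
  ultimately have "bij_betw p (A \<union> (X - A)) (B \<union> (X - B))" by (rule bij_betw_combine) blast
  with assms(2,3) have "bij_betw p X X" by (simp add: Un_absorb1)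
  then have "p permutes X" by (rule bij_imp_permutes) (use assms(2) in \<open>auto simp: p_def\<close>)
  with \<open>bij_betw p A B\<close> show thesis using that bij_betw_imp_surj_on by blast
qed

lemma permute_partition_in_partitions:
  assumes p: "p permutes {..<n}" and P: "P \<in> partitions n r k"
  shows "permute_partition p P \<in> partitions n r k"
proof -
  obtain T M where PTM: "P = (T, M)" by (cases P)
  have inj: "inj p" using p by (rule permutes_inj)
  from P have T: "\<And>i. i < r \<Longrightarrow> T i \<subseteq> {..<n} \<and> card (T i) = k"
    and T0: "\<And>i. r \<le> i \<Longrightarrow> T i = {}"
    and disj: "\<And>i j. i < r \<Longrightarrow> j < r \<Longrightarrow> i \<noteq> j \<Longrightarrow> T i \<inter> T j = {}"
    and M: "M = {..<n} - (\<Union>i<r. T i)"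
    by (auto simp: PTM partitions_def)
  have "p ` M = {..<n} - (\<Union>i<r. p ` T i)"
    unfolding M image_set_diff[OF inj] image_UN permutes_image[OF p] ..
  moreover have "p ` T i \<subseteq> {..<n} \<and> card (p ` T i) = k" if "i < r" for i
    using T[OF that] image_mono[of "T i" "{..<n}" p] permutes_image[OF p]
      card_image[OF inj_on_subset[OF inj subset_UNIV]] by simp
  moreover have "p ` T i \<inter> p ` T j = {}" if "i < r" "j < r" "i \<noteq> j" for i j
    using disj[OF that] by (simp flip: image_Int[OF inj])
  moreover have "p ` T i = {}" if "r \<le> i" for i
    using T0[OF that] by simp
  ultimately show ?thesis
    by (simp add: PTM permute_partition_def partitions_def)
qed

lemma inj_permute_partition: "inj p \<Longrightarrow> inj (permute_partition p)"
  by (auto simp: inj_def permute_partition_def fun_eq_iff inj_image_eq_iff)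

lemma parts_union_permute_partition:
  "parts_union r (fst (permute_partition p P)) = p ` parts_union r (fst P)"
  by (simp add: permute_partition_def parts_union_def image_UN split: prod.split)

lemma card_covering_partitions_mono:
  assumes "A \<subseteq> {..<n}" "B \<subseteq> {..<n}" "card A = card B"
  shows "card (covering_partitions n r k A) \<le> card (covering_partitions n r k B)"
proof -
  obtain p where p: "p permutes {..<n}" "p ` A = B"
    using exists_permutes_image[OF finite_lessThan assms] .
  have "inj_on (permute_partition p) (covering_partitions n r k A)"
    using inj_permute_partition[OF permutes_inj[OF p(1)]] by (rule inj_on_subset) simp
  moreover have "permute_partition p ` covering_partitions n r k A \<subseteq> covering_partitions n r k B"
    using p permute_partition_in_partitions
    by (auto simp: covering_partitions_def parts_union_permute_partition)
  moreover have "finite (covering_partitions n r k B)"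
    by (simp add: covering_partitions_def finite_partitions)
  ultimately show ?thesis by (rule card_inj_on_le)
qed

lemma card_covering_partitions_le:
  assumes "A \<subseteq> {..<n}" "card A = L"
  shows "(n choose L) * card (covering_partitions n r k A) \<le> card (partitions n r k) * (r * k choose L)"
proof -
  \<comment> \<open>By symmetry every L-subset is covered equally often; double count the pairs (B, P) with B covered by P.\<close>
  let ?Pi = "partitions n r k" and ?Subs = "{A. A \<subseteq> {..<n} \<and> card A = L}"
  have cov_eq: "card (covering_partitions n r k B) = card (covering_partitions n r k A)" if "B \<in> ?Subs" for B
    using that assms card_covering_partitions_mono by (intro antisym) auto
  have "(n choose L) * card (covering_partitions n r k A) = (\<Sum>B\<in>?Subs. card (covering_partitions n r k B))"
    by (simp add: cov_eq n_subsets)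
  also have "\<dots> = (\<Sum>B\<in>?Subs. \<Sum>P\<in>?Pi. if B \<subseteq> parts_union r (fst P) then 1 else 0)"
    by (simp add: covering_partitions_def finite_partitions sum.inter_filter[symmetric])
  also have "\<dots> = (\<Sum>P\<in>?Pi. card {B \<in> ?Subs. B \<subseteq> parts_union r (fst P)})"
    by (subst sum.swap) (simp add: sum.inter_filter[symmetric])
  also have "\<dots> \<le> (\<Sum>P\<in>?Pi. r * k choose L)"
  proof (rule sum_mono)
    fix P assume P: "P \<in> ?Pi"
    then have sub: "parts_union r (fst P) \<subseteq> {..<n}"
      using parts_union_subset[of "fst P" "snd P"] by simp
    then have "{B \<in> ?Subs. B \<subseteq> parts_union r (fst P)} = {B. B \<subseteq> parts_union r (fst P) \<and> card B = L}"
      by auto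
    also have "card \<dots> = card (parts_union r (fst P)) choose L"
      using sub finite_subset by (blast intro: n_subsets)
    also have "\<dots> \<le> r * k choose L"
      using P card_parts_union_le[of "fst P" "snd P"] by (simp add: binomial_right_mono)
    finally show "card {B \<in> ?Subs. B \<subseteq> parts_union r (fst P)} \<le> r * k choose L" .
  qed
  finally show ?thesis by simp
qed

lemma card_partitions_hitting_le:
  assumes "S \<subseteq> {..<n}"
  shows "card {P \<in> partitions n r k. L \<le> card (S \<inter> parts_union r (fst P))} * (n choose L)
    \<le> (card S choose L) * (r * k choose L) * card (partitions n r k)"
proof -
  let ?Pi = "partitions n r k" and ?SubsS = "{A. A \<subseteq> S \<and> card A = L}"
  have fin: "finite S" using assms finite_subset by blast
  then have fin_subs: "finite ?SubsS" by simp
  have "{P \<in> ?Pi. L \<le> card (S \<inter> parts_union r (fst P))} \<subseteq> (\<Union>A\<in>?SubsS. covering_partitions n r k A)"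
  proof
    fix P assume "P \<in> {P \<in> ?Pi. L \<le> card (S \<inter> parts_union r (fst P))}"
    moreover from this obtain A where "A \<subseteq> S \<inter> parts_union r (fst P)" "card A = L"
      using obtain_subset_with_card_n by blast
    ultimately show "P \<in> (\<Union>A\<in>?SubsS. covering_partitions n r k A)"
      by (auto simp: covering_partitions_def)
  qed
  then have "card {P \<in> ?Pi. L \<le> card (S \<inter> parts_union r (fst P))}
      \<le> card (\<Union>A\<in>?SubsS. covering_partitions n r k A)"
    using fin_subs by (intro card_mono) (auto simp: covering_partitions_def finite_partitions)
  also have "\<dots> \<le> (\<Sum>A\<in>?SubsS. card (covering_partitions n r k A))"
    using fin_subs by (rule card_UN_le)
  finally have "card {P \<in> ?Pi. L \<le> card (S \<inter> parts_union r (fst P))}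
      \<le> (\<Sum>A\<in>?SubsS. card (covering_partitions n r k A))" .
  then have "card {P \<in> ?Pi. L \<le> card (S \<inter> parts_union r (fst P))} * (n choose L)
      \<le> (\<Sum>A\<in>?SubsS. (n choose L) * card (covering_partitions n r k A))"
    unfolding sum_distrib_left[symmetric] by (subst mult.commute) (rule mult_le_mono2)
  also have "\<dots> \<le> (\<Sum>A\<in>?SubsS. card ?Pi * (r * k choose L))"
    using assms by (intro sum_mono card_covering_partitions_le) auto
  also have "\<dots> = (card S choose L) * (r * k choose L) * card ?Pi"
    by (simp add: n_subsets[OF fin])
  finally show ?thesis .
qed

lemma choose_mult_choose_div_le:
  fixes a b n L :: nat
  assumes "0 < L" "L \<le> n"
  shows "real (a choose L) * real (b choose L) / real (n choose L) \<le> (real a * real b * real L / real n) ^ L"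
proof -
  have choose_le: "real (m choose L) \<le> real m ^ L" for m
    by (cases "L \<le> m") (simp_all add: binomial_eq_0 flip: of_nat_power, use binomial_le_pow in blast)
  have "real (a choose L) * real (b choose L) / real (n choose L)
      \<le> real a ^ L * real b ^ L / (real n / real L) ^ L"
    using assms by (intro frac_le mult_mono choose_le binomial_ge_n_over_k_pow_k) auto
  also have "\<dots> = (real a * real b * real L / real n) ^ L"
    by (simp add: power_divide power_mult_distrib)
  finally show ?thesis .
qed

lemma unif_prob_complement_le:
  assumes "finite A" "A \<noteq> {}" "\<And>x. x \<in> A \<Longrightarrow> \<not> R x \<Longrightarrow> Q x"
  shows "1 - unif_prob A Q \<le> unif_prob A R"
proof -
  have pos: "0 < real (card A)" using assms(1,2) by (simp add: card_gt_0_iff)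
  have "{x \<in> A. Q x} \<union> {x \<in> A. \<not> Q x} = A" by blast
  with assms(1) have "card A = card {x \<in> A. Q x} + card {x \<in> A. \<not> Q x}"
    by (metis (no_types, lifting) card_Un_disjoint disjoint_iff finite_Un mem_Collect_eq)
  moreover have "card {x \<in> A. \<not> Q x} \<le> card {x \<in> A. R x}"
    using assms by (intro card_mono) auto
  ultimately have "real (card A) - real (card {x \<in> A. Q x}) \<le> real (card {x \<in> A. R x})"
    by linarith
  then have "(real (card A) - real (card {x \<in> A. Q x})) / real (card A) \<le> unif_prob A R"
    unfolding unif_prob_def using pos by (intro divide_right_mono) simp_all
  then show ?thesis using pos by (simp add: unif_prob_def diff_divide_distrib)
qed

lemma prob_many_hits_le:
  assumes "r * k \<le> n" "S \<subseteq> {..<n}" "0 < L" "L \<le> n"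
  shows "unif_prob (partitions n r k) (\<lambda>P. L \<le> card (S \<inter> parts_union r (fst P)))
    \<le> (real (card S) * real (r * k) * real L / real n) ^ L"
proof -
  let ?Pi = "partitions n r k" and ?hits = "{P \<in> partitions n r k. L \<le> card (S \<inter> parts_union r (fst P))}"
  have "card ?Pi > 0"
    using finite_partitions partitions_nonempty[OF assms(1)] by (simp add: card_gt_0_iff)
  moreover have "n choose L > 0" using assms(4) by simp
  moreover have "real (card ?hits) * real (n choose L)
      \<le> real (card S choose L) * real (r * k choose L) * real (card ?Pi)"
    using card_partitions_hitting_le[OF assms(2)] by (simp only: of_nat_mult[symmetric] of_nat_le_iff)
  ultimately have "real (card ?hits) / real (card ?Pi)
      \<le> real (card S choose L) * real (r * k choose L) / real (n choose L)"
    by (simp add: field_simps)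
  also have "\<dots> \<le> (real (card S) * real (r * k) * real L / real n) ^ L"
    using assms(3,4) by (rule choose_mult_choose_div_le)
  finally show ?thesis by (simp add: unif_prob_def)
qed

text \<open>The paper's condition that g(S \<inter> T_i) + b(S \<inter> T_{-i}) does not depend on i,
  for g = card and b = min card \<beta>.\<close>
definition split_value_constant :: "nat \<Rightarrow> real \<Rightarrow> nat set \<Rightarrow> (nat \<Rightarrow> nat set) \<Rightarrow> bool" where
  "split_value_constant r \<beta> S T \<longleftrightarrow> (\<forall>i<r. \<forall>j<r.
     real (card (S \<inter> T i)) + min (real (card (S \<inter> Tminus r T i))) \<beta> =
     real (card (S \<inter> T j)) + min (real (card (S \<inter> Tminus r T j))) \<beta>)"

lemma split_value_eq_card_hits:
  assumes P: "(T, M) \<in> partitions n r k" and i: "i < r"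
    and few: "real (card (S \<inter> parts_union r T)) \<le> \<beta>"
  shows "real (card (S \<inter> T i)) + min (real (card (S \<inter> Tminus r T i))) \<beta>
    = real (card (S \<inter> parts_union r T))"
proof -
  have fin: "finite (T j)" if "j < r" for j
    using P that finite_subset by (auto simp: partitions_def)
  have "S \<inter> parts_union r T = (S \<inter> T i) \<union> (S \<inter> Tminus r T i)"
    using i by (auto simp: parts_union_def Tminus_def)
  moreover have "(S \<inter> T i) \<inter> (S \<inter> Tminus r T i) = {}"
    using P i unfolding partitions_def Tminus_def by blast
  ultimately have "card (S \<inter> parts_union r T) = card (S \<inter> T i) + card (S \<inter> Tminus r T i)"
    using fin i by (simp add: card_Un_disjoint Tminus_def)
  with few show ?thesis by simp
qed

lemma balance_failure_le:
  assumes "r * k \<le> n" "S \<subseteq> {..<n}" "0 < L" "L \<le> n" "real L \<le> \<beta> + 1"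
  shows "1 - unif_prob (partitions n r k) (\<lambda>(T, M). split_value_constant r \<beta> S T)
    \<le> (real (card S) * real (r * k) * real L / real n) ^ L"
proof -
  have "1 - unif_prob (partitions n r k) (\<lambda>(T, M). split_value_constant r \<beta> S T)
    \<le> unif_prob (partitions n r k) (\<lambda>P. L \<le> card (S \<inter> parts_union r (fst P)))"
  proof (rule unif_prob_complement_le[OF finite_partitions partitions_nonempty[OF assms(1)]])
    fix P assume P: "P \<in> partitions n r k" and few: "\<not> L \<le> card (S \<inter> parts_union r (fst P))"
    obtain T M where PTM: "P = (T, M)" by (cases P)
    from few have "real (card (S \<inter> parts_union r T)) + 1 \<le> real L"
      by (simp add: PTM flip: of_nat_Suc)
    with assms(5) have "real (card (S \<inter> parts_union r T)) \<le> \<beta>" by linarith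
    with P show "case P of (T, M) \<Rightarrow> split_value_constant r \<beta> S T"
      by (simp add: PTM split_value_constant_def split_value_eq_card_hits)
  qed
  also have "\<dots> \<le> (real (card S) * real (r * k) * real L / real n) ^ L"
    using assms(1-4) by (rule prob_many_hits_le)
  finally show ?thesis .
qed

lemma eventually_small_sets_balanced:
  fixes r k :: "nat \<Rightarrow> nat" and \<epsilon> c :: real
  assumes "\<epsilon> > 0" "c > 0" and rk: "\<And>n. real (r n * k n) \<le> real n powr (1/2 - \<epsilon>/2)"
  shows "eventually (\<lambda>n. \<forall>S. S \<subseteq> {..<n} \<and> real (card S) \<le> real n powr (1/2 + \<epsilon>/4) \<longrightarrow>
      1 - unif_prob (partitions n (r n) (k n)) (\<lambda>(T, M). split_value_constant (r n) (ln (real n)) S T)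
      \<le> real n powr (- c)) at_top"
proof -
  have "eventually (\<lambda>n. 2 \<le> real n) at_top"
    and "eventually (\<lambda>n. ln (real n) + 1 \<le> real n) at_top"
    and "eventually (\<lambda>n. 8 * c / \<epsilon> \<le> ln (real n)) at_top"
    and "eventually (\<lambda>n. real n powr (1/2 - \<epsilon>/2) \<le> real n) at_top"
    and "eventually (\<lambda>n. real n powr (1 - \<epsilon>/4) * (ln (real n) + 1) / real n \<le> real n powr (-\<epsilon>/8)) at_top"
    using assms(1,2) by real_asymp+
  then show ?thesis
  proof eventually_elim
    case (elim n)
    define L where "L = nat \<lfloor>ln (real n)\<rfloor> + 1"
    have ln_pos: "0 \<le> ln (real n)" using elim(1) by simp
    then have L: "ln (real n) < real L" "real L \<le> ln (real n) + 1"
      unfolding L_def by linarith+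
    have "real (r n * k n) \<le> real n" using rk[of n] elim(4) by linarith
    then have rkn: "r n * k n \<le> n" by (simp only: of_nat_le_iff)
    show ?case
    proof (intro allI impI)
      fix S assume S: "S \<subseteq> {..<n} \<and> real (card S) \<le> real n powr (1/2 + \<epsilon>/4)"
      have "real (card S) * real (r n * k n) \<le> real n powr (1/2 + \<epsilon>/4) * real n powr (1/2 - \<epsilon>/2)"
        using S rk[of n] by (intro mult_mono) auto
      also have "\<dots> = real n powr (1 - \<epsilon>/4)" by (simp flip: powr_add)
      finally have "real (card S) * real (r n * k n) * real L / real n
          \<le> real n powr (1 - \<epsilon>/4) * (ln (real n) + 1) / real n"
        using L ln_pos by (intro divide_right_mono mult_mono) auto
      with elim(5) have base: "real (card S) * real (r n * k n) * real L / real n \<le> real n powr (-\<epsilon>/8)"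
        by linarith
      have "1 - unif_prob (partitions n (r n) (k n)) (\<lambda>(T, M). split_value_constant (r n) (ln (real n)) S T)
          \<le> (real (card S) * real (r n * k n) * real L / real n) ^ L"
        using L elim(2) rkn S by (intro balance_failure_le) (auto simp: L_def)
      also have "\<dots> \<le> (real n powr (-\<epsilon>/8)) ^ L"
        using base by (intro power_mono) auto
      also have "\<dots> = real n powr (- (\<epsilon>/8 * real L))"
        using elim(1) by (simp add: powr_power algebra_simps)
      also have "\<dots> \<le> real n powr (- c)"
      proof -
        have "c \<le> \<epsilon>/8 * ln (real n)" using elim(3) assms(1) by (simp add: field_simps)
        also have "\<dots> \<le> \<epsilon>/8 * real L" using L assms(1) by simp
        finally show ?thesis using elim(1) by (intro powr_mono) auto
      qed
      finally show "1 - unif_prob (partitions n (r n) (k n)) (\<lambda>(T, M). split_value_constant (r n) (ln (real n)) S T)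
          \<le> real n powr (- c)" .
    qed
  qed
qed

lemma card_inter_rest_ge:
  assumes "(T, M) \<in> partitions n r k" "S \<subseteq> {..<n}"
  shows "card S - r * k \<le> card (S \<inter> M)"
proof -
  have "S \<inter> M = S - parts_union r T"
    using assms by (auto simp: partitions_def parts_union_def)
  moreover have "finite (parts_union r T)"
    using parts_union_subset[OF assms(1)] finite_subset by blast
  ultimately have "card S - card (parts_union r T) \<le> card (S \<inter> M)"
    by (simp add: diff_card_le_card_Diff)
  with card_parts_union_le[OF assms(1)] show ?thesis by linarith
qed

lemma eventually_large_sets_saturate:
  fixes r k :: "nat \<Rightarrow> nat" and \<epsilon> c :: real
  assumes "\<epsilon> > 0" and rk: "\<And>n. real (r n * k n) \<le> real n powr (1/2 - \<epsilon>/2)"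
  shows "eventually (\<lambda>n. \<forall>S. S \<subseteq> {..<n} \<and> real (card S) \<ge> real n powr (1/2 + \<epsilon>/4) \<longrightarrow>
      1 - unif_prob (partitions n (r n) (k n)) (\<lambda>(T, M). min 1 (real (card (S \<inter> M)) / sqrt (real n)) = 1)
      \<le> real n powr (- c)) at_top"
proof -
  have "eventually (\<lambda>n. 1 \<le> real n) at_top"
    and "eventually (\<lambda>n. real n powr (1/2 - \<epsilon>/2) + sqrt (real n) \<le> real n powr (1/2 + \<epsilon>/4)) at_top"
    and "eventually (\<lambda>n. real n powr (1/2 - \<epsilon>/2) \<le> real n) at_top"
    using assms(1) by real_asymp+
  then show ?thesis
  proof eventually_elim
    case (elim n)
    have "real (r n * k n) \<le> real n" using rk[of n] elim(3) by linarith
    then have rkn: "r n * k n \<le> n" by (simp only: of_nat_le_iff)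
    show ?case
    proof (intro allI impI)
      fix S assume S: "S \<subseteq> {..<n} \<and> real (card S) \<ge> real n powr (1/2 + \<epsilon>/4)"
      have "1 - unif_prob (partitions n (r n) (k n))
            (\<lambda>(T, M). min 1 (real (card (S \<inter> M)) / sqrt (real n)) = 1)
          \<le> unif_prob (partitions n (r n) (k n)) (\<lambda>_. False)"
      proof (rule unif_prob_complement_le[OF finite_partitions partitions_nonempty[OF rkn]])
        fix P assume P: "P \<in> partitions n (r n) (k n)"
        obtain T M where PTM: "P = (T, M)" by (cases P)
        have "card S - r n * k n \<le> card (S \<inter> M)"
          using P S by (intro card_inter_rest_ge) (auto simp: PTM)
        then have "real (card S) - real (r n * k n) \<le> real (card (S \<inter> M))" by linarith
        with S rk[of n] elim(2) have "sqrt (real n) \<le> real (card (S \<inter> M))" by linarith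
        moreover have "0 < sqrt (real n)" using elim(1) by simp
        ultimately show "case P of (T, M) \<Rightarrow> min 1 (real (card (S \<inter> M)) / sqrt (real n)) = 1"
          by (simp add: PTM)
      qed
      moreover have "unif_prob (partitions n (r n) (k n)) (\<lambda>_. False) = 0"
        by (simp add: unif_prob_def)
      ultimately show "1 - unif_prob (partitions n (r n) (k n))
            (\<lambda>(T, M). min 1 (real (card (S \<inter> M)) / sqrt (real n)) = 1) \<le> real n powr (- c)"
        using powr_ge_zero[of "real n" "- c"] by linarith
    qed
  qed
qed

lemma eventually_card_dominates:
  fixes \<epsilon> :: real
  assumes "\<epsilon> > 0"
  shows "eventually (\<lambda>n. \<forall>S. S \<subseteq> {..<n} \<and> card S = nat \<lfloor>real n powr (1/4 - \<epsilon>/2)\<rfloor> \<longrightarrow>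
      real (card S) \<ge> max (real n powr (1/4 - \<epsilon>) * min (real (card S)) (ln (real n)))
        (real n powr (1/4 - \<epsilon>) * (real n powr (-1/4) * min (sqrt (real n)) (real (card S))))) at_top"
proof -
  have "eventually (\<lambda>n. 1 \<le> real n) at_top"
    and "eventually (\<lambda>n. real n powr (1/4 - \<epsilon>) * ln (real n) \<le> real n powr (1/4 - \<epsilon>/2) / 2) at_top"
    and "eventually (\<lambda>n. real n powr (1/4 - \<epsilon>) * real n powr (-1/4) \<le> 1) at_top"
    using assms by real_asymp+
  then show ?thesis
  proof eventually_elim
    case (elim n)
    show ?case
    proof (intro allI impI)
      fix S assume S: "S \<subseteq> {..<n} \<and> card S = nat \<lfloor>real n powr (1/4 - \<epsilon>/2)\<rfloor>"
      have "real n powr (1/4 - \<epsilon>) * min (real (card S)) (ln (real n)) \<le> real (card S)"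
      proof (cases "card S = 0")
        case True
        then show ?thesis using elim(1) by simp
      next
        case False
        with S have "1 \<le> nat \<lfloor>real n powr (1/4 - \<epsilon>/2)\<rfloor>" by linarith
        then have "real n powr (1/4 - \<epsilon>/2) / 2 \<le> real (nat \<lfloor>real n powr (1/4 - \<epsilon>/2)\<rfloor>)"
          by linarith
        with S have "real n powr (1/4 - \<epsilon>/2) / 2 \<le> real (card S)" by simp
        moreover have "real n powr (1/4 - \<epsilon>) * min (real (card S)) (ln (real n))
            \<le> real n powr (1/4 - \<epsilon>) * ln (real n)"
          by (intro mult_left_mono) auto
        ultimately show ?thesis using elim(2) by linarith
      qed
      moreover have "real n powr (1/4 - \<epsilon>) * (real n powr (-1/4) * min (sqrt (real n)) (real (card S)))
          \<le> 1 * real (card S)"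
        unfolding mult.assoc[symmetric] using elim(3) by (intro mult_mono) auto
      ultimately show "real (card S) \<ge> max (real n powr (1/4 - \<epsilon>) * min (real (card S)) (ln (real n)))
        (real n powr (1/4 - \<epsilon>) * (real n powr (-1/4) * min (sqrt (real n)) (real (card S))))"
        by simp
    qed
  qed
qed

lemma card_ratio_bound:
  fixes r k :: "nat \<Rightarrow> nat"
  shows "eventually (\<lambda>n. \<forall>S1 S2. S1 \<subseteq> {..<n} \<and> S2 \<subseteq> {..<n} \<and> card S1 = k n \<and>
      real (card S2) = real (k n) / real (r n) \<longrightarrow> real (card S1) \<ge> real (r n) * real (card S2)) at_top"
  by (intro always_eventually allI impI) (cases "r n = 0"; simp)

lemma real_nat_floor_mult_le: "0 \<le> u \<Longrightarrow> 0 \<le> v \<Longrightarrow> real (nat \<lfloor>u\<rfloor> * nat \<lfloor>v\<rfloor>) \<le> u * v"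
  by (simp add: mult_mono)

theorem lemma25:
  fixes \<epsilon> :: real
  assumes "\<epsilon> > 0"
  shows "has_gap
    (\<lambda>n. nat \<lfloor>real n powr (1/4 - \<epsilon>/2)\<rfloor>)
    (\<lambda>n. nat \<lfloor>real n powr (1/4)\<rfloor>)
    (\<lambda>n S. real (card S))
    (\<lambda>n S. min (real (card S)) (ln (real n)))
    (\<lambda>n S. min 1 (real (card S) / sqrt (real n)))
    (\<lambda>n S. real n powr (-1/4) * min (sqrt (real n)) (real (card S)))
    (\<lambda>n. real n powr (1/4 - \<epsilon>))
    (\<lambda>n. 0)
    (\<lambda>n. real n powr (1/2 + \<epsilon>/4))"
proof -
  have rk: "real (nat \<lfloor>real n powr (1/4)\<rfloor> * nat \<lfloor>real n powr (1/4 - \<epsilon>/2)\<rfloor>)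
      \<le> real n powr (1/2 - \<epsilon>/2)" for n
    using real_nat_floor_mult_le[of "real n powr (1/4)" "real n powr (1/4 - \<epsilon>/2)"]
    by (simp flip: powr_add)
  show ?thesis
    unfolding has_gap_def
    using eventually_small_sets_balanced[OF assms _ rk] eventually_large_sets_saturate[OF assms rk]
      eventually_card_dominates[OF assms] card_ratio_bound
    by (simp add: split_value_constant_def)
qed

end
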